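(* Let $G$ be a finite metacyclic group. Then $\epsilon_G(A)$ takes the same value for every minimal kernel $A$ of $G$; i.e. if $A$ is a minimal kernel of $G$ then $\epsilon_G=\epsilon_G(A)$, where $\epsilon_G$ denotes this common value.
   Context: All groups are finite. A (metacyclic) kernel of $G$ is a normal subgroup $A$ such that $A$ and $G/A$ are cyclic; a minimal kernel is a kernel of minimal order. For $A$ cyclic normal of order $m$, $T_G(A)$ is the subgroup of the unit group $\mathcal U_m$ of $\mathbb Z/m\mathbb Z$ formed by the classes $[k]_m$ such that $x\mapsto x^k$ is the restriction to $A$ of an inner automorphism of $G$. For $m\in\mathbb N$ write $m_2$ for the largest power of $2$ dividing $m$ and $m_{2'}=m/m_2$. For cyclic $T\le\mathcal U_m$ let $r$ be the greatest divisor of $m$ such that the image of $T$ in $\mathcal U_{r_{2'}}$ is trivial and its image in $\mathcal U_{r_2}$ is contained in $\{[1],[-1]\}$; then $\epsilon=-1$ if the image of $T$ in $\mathcal U_{r_2}$ is nontrivial and $\epsilon=1$ otherwise. $\epsilon_G(A)$ is this $\epsilon$ for $T=T_G(A)$. *)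

theory Defs
  imports "HOL-Algebra.Algebra" "HOL-Number_Theory.Number_Theory"
begin

definition mc_kernel :: "('a, 'b) monoid_scheme \<Rightarrow> 'a set \<Rightarrow> bool" where
  "mc_kernel G A \<longleftrightarrow> A \<lhd> G \<and> cyclic_group (G\<lparr>carrier := A\<rparr>) \<and> cyclic_group (G Mod A)"

definition metacyclic :: "('a, 'b) monoid_scheme \<Rightarrow> bool" where
  "metacyclic G \<longleftrightarrow> (\<exists>A. mc_kernel G A)"

definition minimal_kernel :: "('a, 'b) monoid_scheme \<Rightarrow> 'a set \<Rightarrow> bool" where
  "minimal_kernel G A \<longleftrightarrow> mc_kernel G A \<and> (\<forall>B. mc_kernel G B \<longrightarrow> card A \<le> card B)"

definition two_part :: "nat \<Rightarrow> nat" where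
  "two_part m = 2 ^ multiplicity (2::nat) m"

definition odd_part :: "nat \<Rightarrow> nat" where
  "odd_part m = m div two_part m"

text \<open>T_G(A) as a set of residues k in {0..<m}, coprime to m = |A|, representing the
  classes [k]_m in U_m such that x \<mapsto> x^k is the restriction to A of an inner automorphism.\<close>
definition T_G :: "('a, 'b) monoid_scheme \<Rightarrow> 'a set \<Rightarrow> nat set" where
  "T_G G A = {k. k < card A \<and> coprime k (card A) \<and>
     (\<exists>g\<in>carrier G. \<forall>a\<in>A. g \<otimes>\<^bsub>G\<^esub> a \<otimes>\<^bsub>G\<^esub> inv\<^bsub>G\<^esub> g = a [^]\<^bsub>G\<^esub> k)}"

definition eps_r :: "nat \<Rightarrow> nat set \<Rightarrow> nat" where
  "eps_r m T = Max {r. r dvd m \<and>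
      (\<forall>k\<in>T. [k = 1] (mod odd_part r)) \<and>
      (\<forall>k\<in>T. [int k = 1] (mod int (two_part r)) \<or> [int k = -1] (mod int (two_part r)))}"

definition eps_of :: "nat \<Rightarrow> nat set \<Rightarrow> int" where
  "eps_of m T = (if \<exists>k\<in>T. \<not> [k = 1] (mod two_part (eps_r m T)) then -1 else 1)"

definition eps_G :: "('a, 'b) monoid_scheme \<Rightarrow> 'a set \<Rightarrow> int" where
  "eps_G G A = eps_of (card A) (T_G G A)"

end

(*
  For a kernel A of order m, the maximality of r in the definition of eps makes
  eps_G(A) = -1 exactly when 4 divides m and some k in T_G(A) is not 1 mod 4.

  Let B be a kernel of order m and d a divisor of m such that every inner
  automorphism acts on B as a power map x -> x^K with K = 1 (mod d).  Then
  z -> z^(m/d) is a homomorphism of B that is invariant under conjugation.  As G/B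
  is cyclic, G = B<b>, and every commutator [x, y] equals
  b1 (c b2 c^-1) (e b1^-1 e^-1) b2^-1 with b1, b2 in B; hence [x, y]^(m/d) = 1.
  If A = <a> is another kernel of order m and g a g^-1 = a^k, then [g, a] = a^(k-1),
  so m divides (k - 1) m/d, i.e. k = 1 (mod d).  All minimal kernels have the same
  order, so (with d = 4) the condition characterising eps = -1 holds for all of
  them or for none.
*)

theory Submission
  imports Defs
begin

definition eps_admissible :: "nat \<Rightarrow> nat set \<Rightarrow> nat \<Rightarrow> bool" where
  "eps_admissible m T r \<longleftrightarrow> r dvd m \<and> (\<forall>k\<in>T. [k = 1] (mod odd_part r)) \<and>
     (\<forall>k\<in>T. [int k = 1] (mod int (two_part r)) \<or> [int k = -1] (mod int (two_part r)))"

lemma eps_r_eq_Max: "eps_r m T = Max {r. eps_admissible m T r}"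
  unfolding eps_r_def eps_admissible_def ..

lemma two_part_dvd: "two_part n dvd n"
  unfolding two_part_def by (rule multiplicity_dvd)

lemma two_part_mult_odd_part: "two_part n * odd_part n = n"
  by (simp add: odd_part_def two_part_dvd)

lemma odd_odd_part: "n \<noteq> 0 \<Longrightarrow> odd (odd_part n)"
  using multiplicity_decompose[of n "2::nat"] by (simp add: odd_part_def two_part_def)

lemma two_part_dvd_two: "\<not> 4 dvd two_part n \<Longrightarrow> two_part n dvd 2"
proof -
  assume "\<not> 4 dvd two_part n"
  then have "\<not> 2 \<le> multiplicity 2 n"
    using le_imp_power_dvd[of 2 "multiplicity 2 n" "2::nat"] by (auto simp: two_part_def)
  then show ?thesis
    using le_imp_power_dvd[of "multiplicity 2 n" 1 "2::nat"] by (simp add: two_part_def)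
qed

lemma two_part_four_times_odd: "odd q \<Longrightarrow> two_part (4 * q) = 4"
proof -
  assume "odd q"
  then have "multiplicity 2 (4 * q) = (2::nat)"
    by (intro multiplicity_eqI) auto
  then show ?thesis by (simp add: two_part_def)
qed

lemma odd_part_four_times_odd: "odd q \<Longrightarrow> odd_part (4 * q) = q"
  by (simp add: odd_part_def two_part_four_times_odd)

lemma finite_eps_admissible: "m \<noteq> 0 \<Longrightarrow> finite {r. eps_admissible m T r}"
  by (rule finite_subset[of _ "{..m}"]) (auto simp: eps_admissible_def dest: dvd_imp_le)

lemma eps_r_admissible: "m \<noteq> 0 \<Longrightarrow> eps_admissible m T (eps_r m T)"
proof -
  assume "m \<noteq> 0"
  moreover have "eps_admissible m T 1"
    by (simp add: eps_admissible_def odd_part_def two_part_def)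
  ultimately show ?thesis
    unfolding eps_r_eq_Max by (metis Max_in empty_iff finite_eps_admissible mem_Collect_eq)
qed

lemma eps_r_greatest: "m \<noteq> 0 \<Longrightarrow> eps_admissible m T r \<Longrightarrow> r \<le> eps_r m T"
  unfolding eps_r_eq_Max by (simp add: finite_eps_admissible)

lemma odd_imp_cong_pm_one_mod_four:
  assumes "odd k"
  shows "[int k = 1] (mod 4) \<or> [int k = -1] (mod 4)"
proof -
  have "k mod 4 = 1 \<or> k mod 4 = 3" using assms by presburger
  moreover have "int k mod 4 = int (k mod 4)" by (simp add: zmod_int)
  ultimately show ?thesis by (auto simp: cong_def)
qed

lemma coprime_even_imp_odd: "coprime k m \<Longrightarrow> even m \<Longrightarrow> odd (k::nat)"
  by (metis coprime_common_divisor odd_one)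

lemma minus_one_cong_one_iff: "[-1 = 1] (mod int n) \<longleftrightarrow> n dvd 2"
proof -
  have "[-1 = 1] (mod int n) \<longleftrightarrow> int n dvd 2" by (simp add: cong_iff_dvd_diff)
  also have "\<dots> \<longleftrightarrow> n dvd 2" using int_dvd_int_iff[of n 2] by simp
  finally show ?thesis .
qed

lemma cong_minus_one_imp_not_cong_one_mod_four: "[int k = -1] (mod 4) \<Longrightarrow> \<not> [k = 1] (mod 4)"
proof
  assume "[int k = -1] (mod 4)" "[k = 1] (mod 4)"
  then have "[-1 = 1] (mod int 4)"
    using cong_int_iff[of k 1 4] by (metis cong_sym cong_trans of_nat_1 of_nat_numeral)
  then show False by (simp only: minus_one_cong_one_iff) simp
qed

lemma four_dvd_two_part_if_cong_minus_one:
  assumes "[int k = -1] (mod int (two_part n))" and "\<not> [k = 1] (mod two_part n)"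
  shows "4 dvd two_part n"
proof (rule ccontr)
  assume "\<not> 4 dvd two_part n"
  then have "two_part n dvd 2" by (rule two_part_dvd_two)
  then have "[-1 = 1] (mod int (two_part n))" by (simp only: minus_one_cong_one_iff)
  with assms(1) have "[int k = 1] (mod int (two_part n))" by (rule cong_trans)
  with assms(2) show False by (simp flip: cong_int_iff)
qed

lemma eps_admissible_four_times_odd_part:
  assumes adm: "eps_admissible m T r" and "m \<noteq> 0" and "4 dvd m" and odd: "\<forall>k\<in>T. odd k"
  shows "eps_admissible m T (4 * odd_part r)"
proof -
  have "r \<noteq> 0" using adm \<open>m \<noteq> 0\<close> by (auto simp: eps_admissible_def)
  then have q: "odd (odd_part r)" by (rule odd_odd_part)
  have "odd_part r dvd m"
    using adm two_part_mult_odd_part[of r] unfolding eps_admissible_def by (metis dvd_mult_right dvd_trans)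
  moreover have "coprime 4 (odd_part r)" using q coprime_power_left_iff[of 2 2 "odd_part r"] by simp
  ultimately have "4 * odd_part r dvd m" using \<open>4 dvd m\<close> by (simp add: divides_mult)
  then show ?thesis
    using adm odd odd_imp_cong_pm_one_mod_four
    by (simp add: eps_admissible_def two_part_four_times_odd odd_part_four_times_odd q)
qed

lemma four_dvd_two_part_eps_r:
  assumes "m \<noteq> 0" and "4 dvd m" and "\<forall>k\<in>T. odd k"
  shows "4 dvd two_part (eps_r m T)"
proof (rule ccontr)
  define r where "r = eps_r m T"
  assume "\<not> 4 dvd two_part (eps_r m T)"
  then have "two_part r \<le> 2" unfolding r_def by (intro dvd_imp_le two_part_dvd_two) simp_all
  then have "r \<le> 2 * odd_part r"
    using mult_le_mono1[of "two_part r" 2 "odd_part r"] by (simp add: two_part_mult_odd_part)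
  moreover have adm: "eps_admissible m T r" unfolding r_def using \<open>m \<noteq> 0\<close> by (rule eps_r_admissible)
  then have "4 * odd_part r \<le> r"
    unfolding r_def using eps_r_greatest eps_admissible_four_times_odd_part assms by blast
  moreover have "r \<noteq> 0" using adm \<open>m \<noteq> 0\<close> by (auto simp: eps_admissible_def)
  then have "odd (odd_part r)" by (rule odd_odd_part)
  then have "odd_part r > 0" by (rule odd_pos)
  ultimately show False by simp
qed

lemma eps_of_eq_minus_one_iff:
  assumes "m \<noteq> 0" and coprime: "\<forall>k\<in>T. coprime k m"
  shows "eps_of m T = -1 \<longleftrightarrow> 4 dvd m \<and> \<not> (\<forall>k\<in>T. [k = 1] (mod 4))"
proof -
  define t where "t = two_part (eps_r m T)"
  have adm: "eps_admissible m T (eps_r m T)" using \<open>m \<noteq> 0\<close> by (rule eps_r_admissible)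
  then have "t dvd m" unfolding eps_admissible_def t_def using two_part_dvd by (meson dvd_trans)
  have eps: "eps_of m T = -1 \<longleftrightarrow> (\<exists>k\<in>T. \<not> [k = 1] (mod t))"
    by (simp add: eps_of_def t_def)
  show ?thesis
  proof
    assume "eps_of m T = -1"
    then obtain k where k: "k \<in> T" and not_one: "\<not> [k = 1] (mod t)" by (auto simp: eps)
    with adm have minus_one: "[int k = -1] (mod int t)"
      by (auto simp: eps_admissible_def t_def simp flip: cong_int_iff)
    have "4 dvd t" using minus_one not_one unfolding t_def by (rule four_dvd_two_part_if_cong_minus_one)
    then have "int 4 dvd int t" by (simp only: int_dvd_int_iff)
    with minus_one have "[int k = -1] (mod 4)" by (simp add: cong_dvd_modulus)
    then show "4 dvd m \<and> \<not> (\<forall>k\<in>T. [k = 1] (mod 4))"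
      using cong_minus_one_imp_not_cong_one_mod_four \<open>4 dvd t\<close> \<open>t dvd m\<close> k by (blast intro: dvd_trans)
  next
    assume "4 dvd m \<and> \<not> (\<forall>k\<in>T. [k = 1] (mod 4))"
    then obtain k where "4 dvd m" and k: "k \<in> T" and not_one: "\<not> [k = 1] (mod 4)" by blast
    have "\<forall>k\<in>T. odd k"
      using coprime \<open>4 dvd m\<close> coprime_even_imp_odd by (meson dvd_trans even_numeral)
    then have "4 dvd t" unfolding t_def using \<open>m \<noteq> 0\<close> \<open>4 dvd m\<close> four_dvd_two_part_eps_r by blast
    with not_one have "\<not> [k = 1] (mod t)" using cong_dvd_modulus_nat by blast
    with k show "eps_of m T = -1" by (auto simp: eps)
  qed
qed

context group
begin

lemma inv_mult_cancel_left: "x \<in> carrier G \<Longrightarrow> y \<in> carrier G \<Longrightarrow> inv x \<otimes> (x \<otimes> y) = y"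
  by (simp add: m_assoc [symmetric])

lemma mult_inv_cancel_left: "x \<in> carrier G \<Longrightarrow> y \<in> carrier G \<Longrightarrow> x \<otimes> (inv x \<otimes> y) = y"
  by (simp add: m_assoc [symmetric])

lemma pow_eq_pow_iff_cong_ord:
  assumes "x \<in> carrier G"
  shows "x [^] (i::nat) = x [^] (j::nat) \<longleftrightarrow> [i = j] (mod ord x)"
  using int_pow_eq[OF assms, of "int i" "int j"]
  by (simp add: int_pow_int cong_iff_dvd_diff dvd_diff_commute flip: cong_int_iff)

lemma int_pow_eq_nat_pow_mod:
  assumes "finite (carrier G)" and "x \<in> carrier G"
  shows "x [^] (n::int) = x [^] nat (n mod int (ord x))"
proof -
  have "ord x > 0" using ord_ge_1 assms by fastforce
  then have "x [^] n = x [^] (n mod int (ord x))"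
    using int_pow_eq[OF assms(2)] mod_eq_dvd_iff[of "n mod int (ord x)" "int (ord x)" n] by simp
  then show ?thesis using \<open>ord x > 0\<close> by (simp flip: int_pow_int)
qed

lemma conj_hom: "h \<in> carrier G \<Longrightarrow> (\<lambda>x. h \<otimes> x \<otimes> inv h) \<in> hom G G"
  by (rule homI) (simp_all add: m_assoc inv_mult_cancel_left)

lemma conj_nat_pow:
  "h \<in> carrier G \<Longrightarrow> x \<in> carrier G \<Longrightarrow> h \<otimes> x [^] (n::nat) \<otimes> inv h = (h \<otimes> x \<otimes> inv h) [^] n"
  using hom_nat_pow[OF conj_hom] is_group by blast

lemma conj_eq_one_iff:
  assumes "h \<in> carrier G" "x \<in> carrier G"
  shows "h \<otimes> x \<otimes> inv h = \<one> \<longleftrightarrow> x = \<one>"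
proof -
  have "inv h \<otimes> (h \<otimes> x \<otimes> inv h) \<otimes> h = x" using assms by (simp add: m_assoc inv_mult_cancel_left)
  then show ?thesis using assms by auto
qed

lemma ord_conj: "h \<in> carrier G \<Longrightarrow> x \<in> carrier G \<Longrightarrow> ord (h \<otimes> x \<otimes> inv h) = ord x"
  by (simp add: ord_unique pow_eq_id conj_eq_one_iff flip: conj_nat_pow)

lemma commutator_mult_mult:
  assumes "\<beta>\<^sub>1 \<in> carrier G" "\<beta>\<^sub>2 \<in> carrier G" "c \<in> carrier G" "d \<in> carrier G"
    and "c \<otimes> d = d \<otimes> c"
  shows "\<beta>\<^sub>1 \<otimes> c \<otimes> (\<beta>\<^sub>2 \<otimes> d) \<otimes> inv (\<beta>\<^sub>1 \<otimes> c) \<otimes> inv (\<beta>\<^sub>2 \<otimes> d)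
    = \<beta>\<^sub>1 \<otimes> (c \<otimes> \<beta>\<^sub>2 \<otimes> inv c) \<otimes> (d \<otimes> inv \<beta>\<^sub>1 \<otimes> inv d) \<otimes> inv \<beta>\<^sub>2"
proof -
  have "d \<otimes> inv c = inv c \<otimes> (c \<otimes> d) \<otimes> inv c"
    using assms(3,4) by (simp add: m_assoc inv_mult_cancel_left)
  also have "\<dots> = inv c \<otimes> (d \<otimes> c) \<otimes> inv c" by (simp only: assms(5))
  also have "\<dots> = inv c \<otimes> d" using assms(3,4) by (simp add: m_assoc)
  finally have "d \<otimes> (inv c \<otimes> z) = inv c \<otimes> (d \<otimes> z)" if "z \<in> carrier G" for z
    using assms(3,4) that by (simp add: m_assoc [symmetric])
  then show ?thesis using assms(1-4) by (simp add: m_assoc inv_mult_group)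
qed

lemma commutator_eq_one:
  assumes "x \<in> carrier G" "y \<in> carrier G" "x \<otimes> y = y \<otimes> x"
  shows "x \<otimes> y \<otimes> inv x \<otimes> inv y = \<one>"
proof -
  have "x \<otimes> y \<otimes> inv x \<otimes> inv y = y \<otimes> x \<otimes> inv x \<otimes> inv y" using assms(3) by simp
  also have "\<dots> = \<one>" using assms(1,2) by (simp add: m_assoc mult_inv_cancel_left)
  finally show ?thesis .
qed

lemma subgroup_pow_card_eq_one:
  assumes "finite (carrier G)" "subgroup H G" "x \<in> H"
  shows "x [^] card H = \<one>"
proof -
  interpret H: group "G\<lparr>carrier := H\<rparr>" using subgroup.subgroup_is_group assms(2) is_group by blast
  show ?thesis using H.pow_order_eq_1[of x] assms(3) by (simp add: order_def flip: nat_pow_consistent)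
qed

lemma cyclic_subgroup_generator:
  assumes "finite (carrier G)" "subgroup A G" "cyclic_group (G\<lparr>carrier := A\<rparr>)"
  obtains a where "a \<in> A" "ord a = card A" "A = range (\<lambda>k::nat. a [^] k)"
proof -
  interpret A: group "G\<lparr>carrier := A\<rparr>" using subgroup.subgroup_is_group assms(2) is_group by blast
  obtain a where a: "a \<in> A" and "A = range (\<lambda>n::int. a [^]\<^bsub>G\<lparr>carrier := A\<rparr>\<^esub> n)"
    using A.cyclic_group assms(3) by auto
  moreover have aG: "a \<in> carrier G" using subgroup.mem_carrier[OF assms(2) a] .
  ultimately have A_eq: "A = generate G {a}"
    using generate_pow int_pow_consistent[OF assms(2) a] by auto
  then have "ord a = card A" using generate_pow_card[OF aG] by simp
  moreover have "A = range (\<lambda>k::nat. a [^] k)"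
    using generate_pow_on_finite_carrier[OF assms(1) aG] A_eq by auto
  ultimately show ?thesis using that a by blast
qed

lemma conj_cyclic_normal_eq_pow:
  assumes fin: "finite (carrier G)" and nB: "B \<lhd> G" and cB: "cyclic_group (G\<lparr>carrier := B\<rparr>)"
    and h: "h \<in> carrier G"
  obtains K where "K \<in> T_G G B" "\<forall>x\<in>B. h \<otimes> x \<otimes> inv h = x [^] K"
proof -
  interpret B: normal B G using nB .
  obtain b where b: "b \<in> B" and ord_b: "ord b = card B" and gen: "B = range (\<lambda>k::nat. b [^] k)"
    using cyclic_subgroup_generator[OF fin B.subgroup_axioms cB] .
  have bG: "b \<in> carrier G" using b by auto
  have "card B > 0" using ord_b ord_ge_1[OF fin bG] by simp
  obtain K0 :: nat where "h \<otimes> b \<otimes> inv h = b [^] K0"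
    using B.inv_op_closed2[OF h b] gen by auto
  then have K: "h \<otimes> b \<otimes> inv h = b [^] (K0 mod card B)"
    using pow_eq_pow_iff_cong_ord[OF bG] ord_b by (simp add: cong_def)
  define K where "K = K0 mod card B"
  have "coprime K (card B)"
    using pow_ord_eq_ord_iff[OF fin bG, of K] ord_conj[OF h bG] K ord_b by (simp add: K_def)
  moreover have "K < card B" using \<open>card B > 0\<close> by (simp add: K_def)
  moreover have act: "\<forall>x\<in>B. h \<otimes> x \<otimes> inv h = x [^] K"
  proof
    fix x assume "x \<in> B"
    then obtain s :: nat where "x = b [^] s" using gen by auto
    then show "h \<otimes> x \<otimes> inv h = x [^] K"
      using conj_nat_pow[OF h bG, of s] K bG by (simp add: K_def nat_pow_pow mult.commute)
  qed
  ultimately have "K \<in> T_G G B" unfolding T_G_def using h by blast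
  with act that show ?thesis by blast
qed

lemma conj_pow_card_div:
  assumes fin: "finite (carrier G)" and nB: "B \<lhd> G" and cB: "cyclic_group (G\<lparr>carrier := B\<rparr>)"
    and "d dvd card B" and T: "\<forall>K\<in>T_G G B. [K = 1] (mod d)"
    and h: "h \<in> carrier G" and z: "z \<in> B"
  shows "(h \<otimes> z \<otimes> inv h) [^] (card B div d) = z [^] (card B div d)"
proof -
  interpret B: normal B G using nB .
  define N where "N = card B div d"
  have "card B = d * N" using \<open>d dvd card B\<close> by (simp add: N_def)
  obtain K where K: "K \<in> T_G G B" and conj: "h \<otimes> z \<otimes> inv h = z [^] K"
    using conj_cyclic_normal_eq_pow[OF fin nB cB h] z by metis
  have "[K * N = 1 * N] (mod d * N)"
    using T K by (simp add: cong_def mod_mult_mult2)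
  moreover have "ord z dvd card B"
    using subgroup_pow_card_eq_one[OF fin B.subgroup_axioms z] z by (simp add: pow_eq_id)
  ultimately have "[K * N = N] (mod ord z)"
    using \<open>card B = d * N\<close> by (simp add: cong_dvd_modulus_nat)
  then show ?thesis
    using conj pow_eq_pow_iff_cong_ord[of z] z by (simp add: N_def nat_pow_pow)
qed

lemma cyclic_quotient_decomposition:
  assumes "finite (carrier G)" "B \<lhd> G" "cyclic_group (G Mod B)"
  obtains b where "b \<in> carrier G" "\<forall>x\<in>carrier G. \<exists>\<beta>\<in>B. \<exists>i::nat. x = \<beta> \<otimes> b [^] i"
proof -
  interpret B: normal B G using assms(2) .
  interpret Q: group "G Mod B" using B.factorgroup_is_group .
  obtain C where "C \<in> carrier (G Mod B)" and gen: "carrier (G Mod B) = range (\<lambda>n::int. C [^]\<^bsub>G Mod B\<^esub> n)"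
    using Q.cyclic_group assms(3) by auto
  from \<open>C \<in> carrier (G Mod B)\<close> obtain b where b: "b \<in> carrier G" and C: "C = B #> b"
    by (auto simp: carrier_FactGroup)
  have "\<exists>\<beta>\<in>B. \<exists>i::nat. x = \<beta> \<otimes> b [^] i" if x: "x \<in> carrier G" for x
  proof -
    have "B #> x \<in> carrier (G Mod B)" using x by (auto simp: carrier_FactGroup)
    then obtain n :: int where "B #> x = C [^]\<^bsub>G Mod B\<^esub> n" using gen by auto
    also have "\<dots> = B #> b [^] nat (n mod int (ord b))"
      using C B.FactGroup_int_pow[OF b] int_pow_eq_nat_pow_mod[OF assms(1) b] by simp
    finally have "x \<in> B #> b [^] nat (n mod int (ord b))"
      using rcos_self[OF x B.subgroup_axioms] by simp
    then show ?thesis unfolding r_coset_def by auto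
  qed
  then show ?thesis using that b by blast
qed

lemma commutator_cyclic_quotient_form:
  assumes fin: "finite (carrier G)" and nB: "B \<lhd> G" and cQ: "cyclic_group (G Mod B)"
    and x: "x \<in> carrier G" and y: "y \<in> carrier G"
  obtains \<beta>\<^sub>1 \<beta>\<^sub>2 c d where "\<beta>\<^sub>1 \<in> B" "\<beta>\<^sub>2 \<in> B" "c \<in> carrier G" "d \<in> carrier G"
    "x \<otimes> y \<otimes> inv x \<otimes> inv y = \<beta>\<^sub>1 \<otimes> (c \<otimes> \<beta>\<^sub>2 \<otimes> inv c) \<otimes> (d \<otimes> inv \<beta>\<^sub>1 \<otimes> inv d) \<otimes> inv \<beta>\<^sub>2"
proof -
  interpret B: normal B G using nB .
  obtain b where b: "b \<in> carrier G" and dec: "\<forall>x\<in>carrier G. \<exists>\<beta>\<in>B. \<exists>i::nat. x = \<beta> \<otimes> b [^] i"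
    using cyclic_quotient_decomposition[OF fin nB cQ] by blast
  obtain \<beta>\<^sub>1 and i :: nat where \<beta>\<^sub>1: "\<beta>\<^sub>1 \<in> B" and x_eq: "x = \<beta>\<^sub>1 \<otimes> b [^] i" using dec x by blast
  obtain \<beta>\<^sub>2 and j :: nat where \<beta>\<^sub>2: "\<beta>\<^sub>2 \<in> B" and y_eq: "y = \<beta>\<^sub>2 \<otimes> b [^] j" using dec y by blast
  have "b [^] i \<otimes> b [^] j = b [^] j \<otimes> b [^] i" using b by (simp add: nat_pow_mult add.commute)
  then have "x \<otimes> y \<otimes> inv x \<otimes> inv y
      = \<beta>\<^sub>1 \<otimes> (b [^] i \<otimes> \<beta>\<^sub>2 \<otimes> inv (b [^] i)) \<otimes> (b [^] j \<otimes> inv \<beta>\<^sub>1 \<otimes> inv (b [^] j)) \<otimes> inv \<beta>\<^sub>2"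
    unfolding x_eq y_eq using \<beta>\<^sub>1 \<beta>\<^sub>2 b by (intro commutator_mult_mult) auto
  then show ?thesis by (rule that[OF \<beta>\<^sub>1 \<beta>\<^sub>2 nat_pow_closed[OF b] nat_pow_closed[OF b]])
qed

lemma commutator_pow_card_div_eq_one:
  assumes fin: "finite (carrier G)" and nB: "B \<lhd> G" and cB: "cyclic_group (G\<lparr>carrier := B\<rparr>)"
    and cQ: "cyclic_group (G Mod B)" and "d dvd card B" and T: "\<forall>K\<in>T_G G B. [K = 1] (mod d)"
    and x: "x \<in> carrier G" and y: "y \<in> carrier G"
  shows "(x \<otimes> y \<otimes> inv x \<otimes> inv y) [^] (card B div d) = \<one>"
proof -
  interpret B: normal B G using nB .
  interpret Bc: comm_group "G\<lparr>carrier := B\<rparr>"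
    using group.cyclic_imp_abelian_group[OF B.subgroup_is_group[OF is_group] cB] .
  define N where "N = card B div d"
  have comm: "u \<otimes> v = v \<otimes> u" if "u \<in> B" "v \<in> B" for u v
    using Bc.m_comm that by simp
  have pow_closed: "u [^] (n::nat) \<in> B" if "u \<in> B" for u n
    using Bc.nat_pow_closed[of u n] that by (simp flip: nat_pow_consistent)
  have distrib: "(u \<otimes> v) [^] N = u [^] N \<otimes> v [^] N" if "u \<in> B" "v \<in> B" for u v
    using pow_mult_distrib[OF comm[OF that]] that by simp
  have conj: "(h \<otimes> z \<otimes> inv h) [^] N = z [^] N" if "h \<in> carrier G" "z \<in> B" for h z
    unfolding N_def using conj_pow_card_div[OF fin nB cB \<open>d dvd card B\<close> T that] .
  obtain \<beta>\<^sub>1 \<beta>\<^sub>2 c e where \<beta>: "\<beta>\<^sub>1 \<in> B" "\<beta>\<^sub>2 \<in> B" and ce: "c \<in> carrier G" "e \<in> carrier G"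
    and commutator: "x \<otimes> y \<otimes> inv x \<otimes> inv y
      = \<beta>\<^sub>1 \<otimes> (c \<otimes> \<beta>\<^sub>2 \<otimes> inv c) \<otimes> (e \<otimes> inv \<beta>\<^sub>1 \<otimes> inv e) \<otimes> inv \<beta>\<^sub>2"
    by (rule commutator_cyclic_quotient_form[OF fin nB cQ x y])
  have "c \<otimes> \<beta>\<^sub>2 \<otimes> inv c \<in> B" "e \<otimes> inv \<beta>\<^sub>1 \<otimes> inv e \<in> B"
    using \<beta> ce by (simp_all add: B.inv_op_closed2)
  then have "(x \<otimes> y \<otimes> inv x \<otimes> inv y) [^] N = \<beta>\<^sub>1 [^] N \<otimes> \<beta>\<^sub>2 [^] N \<otimes> inv (\<beta>\<^sub>1 [^] N) \<otimes> inv (\<beta>\<^sub>2 [^] N)"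
    unfolding commutator using \<beta> ce by (simp add: distrib conj nat_pow_inv)
  also have "\<dots> = \<one>"
    using \<beta> pow_closed by (intro commutator_eq_one comm) auto
  finally show ?thesis unfolding N_def .
qed

lemma T_G_cong_one_transfer:
  assumes fin: "finite (carrier G)" and nA: "A \<lhd> G" and cA: "cyclic_group (G\<lparr>carrier := A\<rparr>)"
    and kB: "mc_kernel G B" and card: "card A = card B" and "d dvd card B"
    and T: "\<forall>K\<in>T_G G B. [K = 1] (mod d)" and k: "k \<in> T_G G A"
  shows "[k = 1] (mod d)"
proof -
  interpret A: normal A G using nA .
  obtain a where a: "a \<in> A" and ord_a: "ord a = card A"
    using cyclic_subgroup_generator[OF fin A.subgroup_axioms cA] by metis
  have aG: "a \<in> carrier G" using a by auto
  obtain g where g: "g \<in> carrier G" and "g \<otimes> a \<otimes> inv g = a [^] k"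
    using k a unfolding T_G_def by blast
  then have commutator: "g \<otimes> a \<otimes> inv g \<otimes> inv a = a [^] (int k - 1)"
    using aG by (simp add: int_pow_diff int_pow_int)
  define N where "N = card B div d"
  have "card B = d * N" using \<open>d dvd card B\<close> by (simp add: N_def)
  have "card B > 0"
    using kB fin normal_imp_subgroup subgroup.finite_imp_card_positive unfolding mc_kernel_def by blast
  then have "N \<noteq> 0" using \<open>card B = d * N\<close> by auto
  have "(g \<otimes> a \<otimes> inv g \<otimes> inv a) [^] N = \<one>"
    using commutator_pow_card_div_eq_one[OF fin _ _ _ \<open>d dvd card B\<close> T g aG] kB
    unfolding mc_kernel_def N_def by blast
  then have "a [^] ((int k - 1) * int N) = \<one>"
    unfolding commutator using aG by (simp add: int_pow_pow flip: int_pow_int)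
  then have "int d * int N dvd (int k - 1) * int N"
    using int_pow_eq_id[OF aG] ord_a card \<open>card B = d * N\<close> by simp
  then have "int d dvd int k - 1" using \<open>N \<noteq> 0\<close> by simp
  then show ?thesis by (simp add: cong_iff_dvd_diff flip: cong_int_iff)
qed

lemma mc_kernels_T_G_cong_one_iff:
  assumes fin: "finite (carrier G)" and kA: "mc_kernel G A" and kB: "mc_kernel G B"
    and card: "card A = card B" and "d dvd card A"
  shows "(\<forall>k\<in>T_G G A. [k = 1] (mod d)) \<longleftrightarrow> (\<forall>k\<in>T_G G B. [k = 1] (mod d))"
proof -
  have "A \<lhd> G" "cyclic_group (G\<lparr>carrier := A\<rparr>)" "B \<lhd> G" "cyclic_group (G\<lparr>carrier := B\<rparr>)"
    using kA kB unfolding mc_kernel_def by blast+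
  then show ?thesis
    using T_G_cong_one_transfer[OF fin _ _ kB card] T_G_cong_one_transfer[OF fin _ _ kA card [symmetric]]
      \<open>d dvd card A\<close> card by metis
qed

lemma eps_G_eq_minus_one_iff:
  assumes "finite (carrier G)" "subgroup A G"
  shows "eps_G G A = -1 \<longleftrightarrow> 4 dvd card A \<and> \<not> (\<forall>k\<in>T_G G A. [k = 1] (mod 4))"
  unfolding eps_G_def
  using eps_of_eq_minus_one_iff[of "card A" "T_G G A"] subgroup.finite_imp_card_positive[OF assms(2,1)]
  by (simp add: T_G_def)

lemma minimal_kernels_eps_G_eq:
  assumes fin: "finite (carrier G)" and "minimal_kernel G A" "minimal_kernel G B"
  shows "eps_G G A = eps_G G B"
proof -
  have kernels: "mc_kernel G A" "mc_kernel G B" and card: "card A = card B"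
    using assms unfolding minimal_kernel_def by (auto intro: le_antisym)
  then have "subgroup A G" "subgroup B G"
    unfolding mc_kernel_def by (simp_all add: normal_imp_subgroup)
  then have "eps_G G A = -1 \<longleftrightarrow> eps_G G B = -1"
    using eps_G_eq_minus_one_iff[OF fin] mc_kernels_T_G_cong_one_iff[OF fin kernels card, of 4] card
    by auto
  moreover have "eps_G G A \<in> {1, -1}" "eps_G G B \<in> {1, -1}" by (simp_all add: eps_G_def eps_of_def)
  ultimately show ?thesis by auto
qed

end

theorem lemma3p2:
  fixes G :: "('a, 'b) monoid_scheme"
  assumes "group G" and "finite (carrier G)" and "metacyclic G"
  shows "\<exists>e. \<forall>A. minimal_kernel G A \<longrightarrow> eps_G G A = e"
proof (cases "\<exists>A\<^sub>0. minimal_kernel G A\<^sub>0")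
  case True
  then obtain A\<^sub>0 where "minimal_kernel G A\<^sub>0" ..
  then show ?thesis using group.minimal_kernels_eps_G_eq[OF assms(1,2)] by blast
next
  case False
  \<comment> \<open>the claim is then vacuous\<close>
  then show ?thesis by simp
qed

end
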